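(* Let $Y(0),Y(1)$ be integrable real potential outcomes and $X$ a random vector in $\mathbb{R}^{d_X}$ with support $\mathcal{X}=\mathcal{X}_0\cup\mathcal{X}_1$, $\mathcal{X}_0\cap\mathcal{X}_1=\emptyset$, with $D=1\{X\in\mathcal{X}_1\}$ and $Y=DY(1)+(1-D)Y(0)$. Suppose $x\mapsto E[Y(d)|X=x]$ is continuous on $\mathcal{X}$ for $d=0,1$, and local comonotonicity holds: for every $x_1\in\mathcal{X}$ there is a neighborhood $N$ of $x_1$ such that for all $x_2\in N\cap\mathcal{X}$, $$E[Y(1)|X=x_1]\geq E[Y(1)|X=x_2]\iff E[Y(0)|X=x_1]\geq E[Y(0)|X=x_2].$$ Let $\mathcal{F}=\mathrm{cl}(\mathrm{int}(\mathcal{X}_1))\cap\mathrm{cl}(\mathrm{int}(\mathcal{X}_0))$ and for $d\in\{0,1\}$ let $g_d$ be a function on $\mathcal{X}_d\cup\mathcal{F}$ with $g_d(x)=E[Y|X=x]$ for $x\in\mathcal{X}_d$ and continuous at each point of $\mathcal{F}$. Suppose that for some $d$ and some $x\in\mathcal{X}_d$ there is a continuous path $p:[0,1]\to\mathcal{X}_d\cup\mathcal{F}$ with $p(0)=x$, $p(1)=x^*\in\mathcal{F}$, and $E[Y|X=p(t)]=E[Y|X=x]$ for all $t\in(0,1)$. Then $E[Y(1)|X=x]=g_1(x^* )$ and $E[Y(0)|X=x]=g_0(x^* )$.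
   Context: Conditional expectation functions are understood as the unique continuous versions; for $z\in\mathcal{X}$, $E[Y|X=z]$ equals $E[Y(d)|X=z]$ when $z\in\mathcal{X}_d$. *)

theory Defs
  imports "HOL-Analysis.Analysis"
begin

(* Observed-outcome CEF: E[Y|X=z] = E[Y(1)|X=z] on X1, E[Y(0)|X=z] on X0
   (continuous versions m1, m0 of E[Y(d)|X=.]) *)
definition obs_cef :: "('a \<Rightarrow> real) \<Rightarrow> ('a \<Rightarrow> real) \<Rightarrow> 'a set \<Rightarrow> 'a \<Rightarrow> real" where
  "obs_cef m0 m1 X1 z = (if z \<in> X1 then m1 z else m0 z)"

definition boundary_set :: "'a::topological_space set \<Rightarrow> 'a set \<Rightarrow> 'a set" where
  "boundary_set X0 X1 = closure (interior X1) \<inter> closure (interior X0)"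

definition locally_comonotone :: "'a::topological_space set \<Rightarrow> ('a \<Rightarrow> real) \<Rightarrow> ('a \<Rightarrow> real) \<Rightarrow> bool" where
  "locally_comonotone X m0 m1 \<longleftrightarrow>
     (\<forall>x1\<in>X. \<exists>N. open N \<and> x1 \<in> N \<and>
        (\<forall>x2\<in>N \<inter> X. (m1 x1 \<ge> m1 x2 \<longleftrightarrow> m0 x1 \<ge> m0 x2)))"

end

(*
  Along the path the observed regression stays at the level c = E[Y|X=x], and at every point it
  equals one of m0, m1; so at every time t one of m0 (p t), m1 (p t) equals c.  Local
  comonotonicity makes a function constant on any interval on which its partner is constant
  (every point becomes a local maximum, and on a connected set this forces constancy).  A
  last-zero argument then shows that the function starting at c stays at c along the whole
  path, hence its partner is constant as well; so m0, m1 take the same values at x and at xs.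
  Finally, xs lies in the closure of X1 and of X0, where the extensions g1, g0 agree with the
  continuous functions m1, m0, so continuity identifies g_d xs with m_d xs.
*)
theory Submission
  imports Defs
begin

lemma locally_comonotone_commute:
  "locally_comonotone S f g \<longleftrightarrow> locally_comonotone S g f"
  unfolding locally_comonotone_def by metis

lemma locally_comonotone_subset:
  assumes "locally_comonotone S f g" "T \<subseteq> S"
  shows "locally_comonotone T f g"
  unfolding locally_comonotone_def
proof
  fix t assume "t \<in> T"
  with assms obtain N where "open N" "t \<in> N" "\<forall>y\<in>N \<inter> S. g t \<ge> g y \<longleftrightarrow> f t \<ge> f y"
    unfolding locally_comonotone_def by (meson subsetD)
  with assms(2) show "\<exists>N. open N \<and> t \<in> N \<and> (\<forall>y\<in>N \<inter> T. g t \<ge> g y \<longleftrightarrow> f t \<ge> f y)"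
    by (intro exI[of _ N]) auto
qed

lemma locally_comonotone_compose:
  assumes "locally_comonotone X f g" "continuous_on S p" "p ` S \<subseteq> X"
  shows "locally_comonotone S (f \<circ> p) (g \<circ> p)"
  unfolding locally_comonotone_def
proof
  fix t assume t: "t \<in> S"
  then obtain N where N: "open N" "p t \<in> N"
      and com: "\<forall>y\<in>N \<inter> X. g (p t) \<ge> g y \<longleftrightarrow> f (p t) \<ge> f y"
    using assms(1,3) unfolding locally_comonotone_def by blast
  obtain A where A: "open A" "A \<inter> S = p -` N \<inter> S"
    using assms(2) N(1) unfolding continuous_on_open_invariant by blast
  have "t \<in> A" "\<forall>s\<in>A \<inter> S. p s \<in> N \<inter> X"
    using A N(2) t assms(3) by auto
  with A(1) com show "\<exists>A. open A \<and> t \<in> A \<and>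
      (\<forall>s\<in>A \<inter> S. (g \<circ> p) t \<ge> (g \<circ> p) s \<longleftrightarrow> (f \<circ> p) t \<ge> (f \<circ> p) s)"
    by auto
qed

text \<open>Every sublevel set of such a function is clopen in \<open>S\<close>.\<close>

lemma connected_local_max_imp_constant:
  fixes f :: "'a::topological_space \<Rightarrow> 'b::linorder_topology"
  assumes S: "connected S" and f: "continuous_on S f"
    and local_max: "\<And>t. t \<in> S \<Longrightarrow> \<exists>N. open N \<and> t \<in> N \<and> (\<forall>s\<in>N \<inter> S. f s \<le> f t)"
    and "a \<in> S" "b \<in> S"
  shows "f a = f b"
proof -
  have below: "f s \<le> f a" if "a \<in> S" "s \<in> S" for a s
  proof -
    define T where "T = S \<inter> f -` {..f a}"
    have "closedin (top_of_set S) T"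
      unfolding T_def by (rule continuous_closedin_preimage[OF f closed_atMost])
    moreover have "openin (top_of_set S) T"
    proof (subst openin_subopen, intro ballI)
      fix t assume "t \<in> T"
      moreover obtain N where "open N" "t \<in> N" "\<forall>s\<in>N \<inter> S. f s \<le> f t"
        using local_max \<open>t \<in> T\<close> unfolding T_def by blast
      moreover have "openin (top_of_set S) (S \<inter> N)"
        using \<open>open N\<close> by (rule openin_open_Int)
      ultimately show "\<exists>U. openin (top_of_set S) U \<and> t \<in> U \<and> U \<subseteq> T"
        unfolding T_def by (intro exI[of _ "S \<inter> N"]) (auto intro: order_trans)
    qed
    moreover have "a \<in> T"
      using \<open>a \<in> S\<close> unfolding T_def by simp
    ultimately have "T = S"
      using S unfolding connected_clopen by blast
    with \<open>s \<in> S\<close> show ?thesis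
      unfolding T_def by auto
  qed
  show ?thesis
    using below[of a b] below[of b a] assms(4,5) by (simp add: order_antisym)
qed

lemma locally_comonotone_constant_imp_constant:
  fixes f g :: "'a::topological_space \<Rightarrow> real"
  assumes "locally_comonotone S f g" "connected S" "continuous_on S f"
    and "\<forall>s\<in>S. g s = c" "a \<in> S" "b \<in> S"
  shows "f a = f b"
proof (rule connected_local_max_imp_constant[OF assms(2,3) _ assms(5,6)])
  fix t assume "t \<in> S"
  then show "\<exists>N. open N \<and> t \<in> N \<and> (\<forall>s\<in>N \<inter> S. f s \<le> f t)"
    using assms(1,4) unfolding locally_comonotone_def by (metis IntD2 order_refl)
qed

text \<open>
  Were \<open>h1 t \<noteq> c\<close> for some interior \<open>t\<close>, then \<open>h0 = c\<close> on \<open>[l, t]\<close> with \<open>l\<close> the last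
  zero of \<open>h1 - c\<close> before \<open>t\<close>, which forces \<open>h1\<close> to be constant on \<open>[l, t]\<close>.
\<close>

lemma locally_comonotone_alternating_level:
  fixes h0 h1 :: "real \<Rightarrow> real"
  assumes ab: "a < b"
    and cont0: "continuous_on {a..b} h0" and cont1: "continuous_on {a..b} h1"
    and com: "locally_comonotone {a..b} h0 h1"
    and start: "h1 a = c" and level: "\<forall>t\<in>{a<..<b}. h1 t = c \<or> h0 t = c"
  shows "h1 b = h1 a \<and> h0 b = h0 a"
proof -
  have interior_level: "h1 t = c" if t: "a < t" "t < b" for t
  proof (rule ccontr)
    assume ne: "h1 t \<noteq> c"
    define Z where "Z = {s\<in>{a..t}. h1 s = c}"
    have "closedin (top_of_set {a..t}) Z"
      unfolding Z_def using cont1 t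
      by (intro continuous_closedin_preimage_constant) (auto intro: continuous_on_subset)
    then have "compact Z"
      by (rule closedin_compact[OF compact_Icc])
    moreover have "a \<in> Z"
      using start t unfolding Z_def by simp
    ultimately obtain l where l: "l \<in> Z" "\<forall>s\<in>Z. s \<le> l"
      using compact_attains_sup by blast
    then have l_le: "a \<le> l" "l < t" and "h1 l = c"
      using ne unfolding Z_def by (auto simp: order_le_less)
    have sub: "{l..t} \<subseteq> {a..b}"
      using l_le t by auto
    have h0_level: "h0 s = c" if s: "s \<in> {l<..<t}" for s
    proof -
      have "s \<notin> Z"
        using l(2) s by (meson greaterThanLessThan_iff not_le)
      then have "h1 s \<noteq> c"
        using s l_le unfolding Z_def by simp
      moreover have "s \<in> {a<..<b}"
        using s l_le t by simp
      ultimately show ?thesis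
        using level by blast
    qed
    have h0_const: "\<forall>s\<in>{l..t}. h0 s = c"
      using continuous_constant_on_closure[of "{l<..<t}" h0 c,
          unfolded closure_greaterThanLessThan[OF \<open>l < t\<close>]]
        continuous_on_subset[OF cont0 sub] h0_level
      by blast
    have "h1 t = h1 l"
    proof (rule locally_comonotone_constant_imp_constant[of "{l..t}" h1 h0 c])
      show "locally_comonotone {l..t} h1 h0"
        using locally_comonotone_subset[OF locally_comonotone_commute[THEN iffD1, OF com] sub] .
      show "continuous_on {l..t} h1"
        using continuous_on_subset[OF cont1 sub] .
    qed (use h0_const l_le in auto)
    with ne \<open>h1 l = c\<close> show False
      by simp
  qed
  have h1_const: "\<forall>t\<in>{a..b}. h1 t = c"
    using continuous_constant_on_closure[of "{a<..<b}" h1 c,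
        unfolded closure_greaterThanLessThan[OF ab]] cont1 interior_level
    by auto
  have "h0 b = h0 a"
    by (rule locally_comonotone_constant_imp_constant[OF com _ cont0 h1_const]) (use ab in auto)
  with h1_const ab show ?thesis
    by simp
qed

lemma continuous_within_eq_on_closure:
  fixes f g :: "'a::t2_space \<Rightarrow> 'b::t2_space"
  assumes f: "continuous (at x within B) f" and g: "continuous (at x within C) g"
    and "A \<subseteq> B" "A \<subseteq> C" and eq: "\<forall>z\<in>A. f z = g z" and x: "x \<in> closure A"
  shows "f x = g x"
proof (cases "x \<in> A")
  case False
  with x have "at x within A \<noteq> bot"
    by (simp add: islimpt_in_closure trivial_limit_within)
  moreover have "(g \<longlongrightarrow> f x) (at x within A)"
  proof (rule tendsto_cong[THEN iffD1])
    show "eventually (\<lambda>z. f z = g z) (at x within A)"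
      using eq by (simp add: eventually_at_filter)
    show "(f \<longlongrightarrow> f x) (at x within A)"
      using continuous_within_subset[OF f \<open>A \<subseteq> B\<close>] by (simp add: continuous_within)
  qed
  moreover have "(g \<longlongrightarrow> g x) (at x within A)"
    using continuous_within_subset[OF g \<open>A \<subseteq> C\<close>] by (simp add: continuous_within)
  ultimately show ?thesis
    by (rule tendsto_unique)
qed (use eq in simp)

lemma locally_comonotone_path_level:
  fixes m0 m1 :: "'a::topological_space \<Rightarrow> real"
  assumes com: "locally_comonotone X m0 m1"
    and cont0: "continuous_on X m0" and cont1: "continuous_on X m1"
    and p: "path p" "path_image p \<subseteq> X"
    and start: "m0 (pathstart p) = c \<or> m1 (pathstart p) = c"
    and level: "\<forall>t\<in>{0<..<1}. m0 (p t) = c \<or> m1 (p t) = c"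
  shows "m0 (pathfinish p) = m0 (pathstart p) \<and> m1 (pathfinish p) = m1 (pathstart p)"
proof -
  have p_cont: "continuous_on {0..1} p" and pX: "p ` {0..1} \<subseteq> X"
    using p by (simp_all add: path_def path_image_def)
  have com_p: "locally_comonotone {0..1} (m0 \<circ> p) (m1 \<circ> p)"
    by (rule locally_comonotone_compose[OF com p_cont pX])
  have cont0_p: "continuous_on {0..1} (m0 \<circ> p)" and cont1_p: "continuous_on {0..1} (m1 \<circ> p)"
    using continuous_on_compose[OF p_cont] continuous_on_subset[OF cont0 pX]
      continuous_on_subset[OF cont1 pX]
    by auto
  from start consider "(m1 \<circ> p) 0 = c" | "(m0 \<circ> p) 0 = c"
    by (auto simp: pathstart_def)
  then have "(m0 \<circ> p) 1 = (m0 \<circ> p) 0 \<and> (m1 \<circ> p) 1 = (m1 \<circ> p) 0"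
  proof cases
    case 1
    with level show ?thesis
      using locally_comonotone_alternating_level[OF _ cont0_p cont1_p com_p] by auto
  next
    case 2
    with level show ?thesis
      using locally_comonotone_alternating_level[OF _ cont1_p cont0_p
          locally_comonotone_commute[THEN iffD1, OF com_p]]
      by auto
  qed
  then show ?thesis
    by (simp add: pathstart_def pathfinish_def)
qed

theorem theoremB2:
  fixes X0 X1 :: "(real ^ 'n) set"
    and m0 m1 g0 g1 :: "real ^ 'n \<Rightarrow> real"
    and d :: nat and x xs :: "real ^ 'n" and p :: "real \<Rightarrow> real ^ 'n"
  defines "X \<equiv> X0 \<union> X1"
    and "F \<equiv> boundary_set X0 X1"
    and "EY \<equiv> obs_cef m0 m1 X1"
    and "Xd \<equiv> (\<lambda>k::nat. if k = 1 then X1 else X0)"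
    and "g \<equiv> (\<lambda>k::nat. if k = 1 then g1 else g0)"
  assumes supp_closed: "closed X"
    and disj: "X0 \<inter> X1 = {}"
    and cont0: "continuous_on X m0"
    and cont1: "continuous_on X m1"
    and comon: "locally_comonotone X m0 m1"
    and g0_eq: "\<forall>z\<in>X0. g0 z = EY z"
    and g1_eq: "\<forall>z\<in>X1. g1 z = EY z"
    and g0_cont: "\<forall>z\<in>F. continuous (at z within (X0 \<union> F)) g0"
    and g1_cont: "\<forall>z\<in>F. continuous (at z within (X1 \<union> F)) g1"
    and d01: "d \<in> {0, 1}"
    and x_in: "x \<in> Xd d"
    and p_path: "path p"
    and p_img: "path_image p \<subseteq> Xd d \<union> F"
    and p_start: "pathstart p = x"
    and p_end: "pathfinish p = xs"
    and xs_in: "xs \<in> F"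
    and p_const: "\<forall>t\<in>{0<..<1}. EY (p t) = EY x"
  shows "m1 x = g1 xs \<and> m0 x = g0 xs"
proof -
  have F_sub: "F \<subseteq> closure X1 \<inter> closure X0"
    unfolding F_def boundary_set_def using closure_mono[OF interior_subset] by blast
  then have "F \<subseteq> X"
    using closure_minimal[of X1 X] supp_closed unfolding X_def by auto
  with xs_in have xs_X: "xs \<in> X"
    by blast
  from \<open>F \<subseteq> X\<close> have path_X: "path_image p \<subseteq> X"
    using p_img unfolding Xd_def X_def by (auto split: if_splits)
  txt \<open>The side \<open>d\<close> of \<open>x\<close> is irrelevant: \<open>EY x\<close> is always one of \<open>m0 x\<close>, \<open>m1 x\<close>.\<close>
  have "m0 x = EY x \<or> m1 x = EY x"
    unfolding EY_def obs_cef_def by simp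
  moreover have "\<forall>t\<in>{0<..<1}. m0 (p t) = EY x \<or> m1 (p t) = EY x"
    using p_const unfolding EY_def obs_cef_def by (auto split: if_splits)
  ultimately have ends: "m0 xs = m0 x \<and> m1 xs = m1 x"
    using locally_comonotone_path_level[OF comon cont0 cont1 p_path path_X] p_start p_end
    by simp
  have g_eq: "\<forall>z\<in>X1. g1 z = m1 z" "\<forall>z\<in>X0. g0 z = m0 z"
    using g1_eq g0_eq disj unfolding EY_def obs_cef_def by auto
  have "g1 xs = m1 xs" "g0 xs = m0 xs"
    using g_eq continuous_within_eq_on_closure[of xs "X1 \<union> F" g1 X m1 X1]
      continuous_within_eq_on_closure[of xs "X0 \<union> F" g0 X m0 X0]
      g1_cont g0_cont cont1 cont0 xs_in xs_X F_sub
    unfolding X_def by (auto simp: continuous_on_eq_continuous_within)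
  with ends show ?thesis
    by simp
qed

end
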